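(* For every prime power $q$, the chromatic number $\chi$ of the Kneser graph of flags of type $\{2,3\}$ of $\mathrm{PG}(6,q)$ satisfies $\chi\le q^4+q^3+q^2+1$.
   Context: Dimensions are projective (planes 2, solids 3). A flag of type $\{2,3\}$ is a pair $(E,S)$ of a plane $E$ and a solid $S$ with $E\subseteq S$; the Kneser graph has these flags as vertices, distinct flags $(E,S),(E',S')$ being adjacent iff $E\cap S'=\emptyset$ and $E'\cap S=\emptyset$. The chromatic number is the least number of independent sets whose union is the whole vertex set. *)

theory Defs
  imports "HOL-Analysis.Analysis"
begin

text \<open>PG(6,q) is modelled as the lattice of subspaces of the 7-dimensional vector space
  F^7 over a finite field F with q elements. A projective subspace of projective dimension d
  is a vector subspace of (vector) dimension d+1.\<close>

definition pg_subspace :: "nat \<Rightarrow> ('a::field ^ 7) set \<Rightarrow> bool" where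
  "pg_subspace d U \<longleftrightarrow> vec.subspace U \<and> vec.dim U = d + 1"

definition flags23 :: "(('a::field ^ 7) set \<times> ('a ^ 7) set) set" where
  "flags23 = {(E, S). pg_subspace 2 E \<and> pg_subspace 3 S \<and> E \<subseteq> S}"

text \<open>Projective subspaces are disjoint iff the vector subspaces meet only in 0.\<close>
definition kneser_adj :: "(('a::field ^ 7) set \<times> ('a ^ 7) set) \<Rightarrow> (('a ^ 7) set \<times> ('a ^ 7) set) \<Rightarrow> bool" where
  "kneser_adj F F' \<longleftrightarrow> F \<noteq> F' \<and> fst F \<inter> snd F' = {0} \<and> fst F' \<inter> snd F = {0}"

definition independent_set :: "'v set \<Rightarrow> ('v \<Rightarrow> 'v \<Rightarrow> bool) \<Rightarrow> 'v set \<Rightarrow> bool" where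
  "independent_set V adj A \<longleftrightarrow> A \<subseteq> V \<and> (\<forall>x\<in>A. \<forall>y\<in>A. \<not> adj x y)"

definition chromatic_number :: "'v set \<Rightarrow> ('v \<Rightarrow> 'v \<Rightarrow> bool) \<Rightarrow> nat" where
  "chromatic_number V adj =
     (LEAST k. \<exists>C :: nat \<Rightarrow> 'v set. (\<forall>i<k. independent_set V adj (C i)) \<and> (\<Union>i<k. C i) = V)"

end

theory Submission
  imports Defs
begin

text \<open>Fix the 4-space \<open>\<Sigma> = {x\<^sub>5 = x\<^sub>6 = 0}\<close> and the line \<open>\<ell> = \<langle>e\<^sub>0, e\<^sub>1\<rangle> \<subseteq> \<Sigma>\<close>.
  To each of the \<open>q\<^sup>4 + q\<^sup>3 + q\<^sup>2\<close> points \<open>Q\<close> of \<open>\<Sigma>\<close> off \<open>\<ell>\<close>, normalised so that its first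
  nonzero coordinate among \<open>x\<^sub>2, x\<^sub>3, x\<^sub>4\<close> is \<open>1\<close>, attach the point
  \<open>R(Q) = \<langle>Q\<^sub>1 e\<^sub>0 + e\<^sub>1\<rangle>\<close> of \<open>\<ell>\<close> and the class of flags \<open>(E, S)\<close> with \<open>Q \<in> S\<close> and
  \<open>Q \<in> E\<close> or \<open>R(Q) \<in> E\<close>; one further class consists of the flags with \<open>e\<^sub>0 \<in> E\<close> or with
  \<open>\<ell> \<subseteq> S\<close> and \<open>E \<inter> \<ell> \<noteq> \<emptyset>\<close>. Any two flags of one class share a point lying in the plane
  of one and the solid of the other, so the classes are independent. They cover all flags: the
  plane \<open>E\<close> meets \<open>\<Sigma>\<close>, and if it does so only in \<open>\<ell>\<close>, say in \<open>\<langle>v\<rangle> \<noteq> \<langle>e\<^sub>0\<rangle>\<close>, while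
  \<open>\<ell> \<not>\<subseteq> S\<close>, then the solid \<open>S\<close> meets \<open>\<Sigma>\<close> in a line other than \<open>\<ell>\<close> and so contains a point
  \<open>w\<close> of \<open>\<Sigma>\<close> off \<open>\<ell>\<close>. Moving along the line \<open>\<langle>w, v\<rangle> \<subseteq> S\<close> changes \<open>Q\<^sub>1\<close> at will
  and keeps \<open>Q\<^sub>2, Q\<^sub>3, Q\<^sub>4\<close>, so one of its points has \<open>R(Q) = \<langle>v\<rangle>\<close>.\<close>

lemma chromatic_number_le_card:
  assumes "finite I"
    and independent: "\<And>i. i \<in> I \<Longrightarrow> independent_set V adj (C i)"
    and cover: "V \<subseteq> (\<Union>i\<in>I. C i)"
  shows "chromatic_number V adj \<le> card I"
proof -
  obtain h where "bij_betw h {0..<card I} I"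
    using ex_bij_betw_nat_finite[OF \<open>finite I\<close>] by blast
  then have h: "h ` {..<card I} = I"
    by (simp add: bij_betw_def lessThan_atLeast0)
  have "C i \<subseteq> V" if "i \<in> I" for i
    using independent[OF that] by (simp add: independent_set_def)
  then have "(\<Union>i\<in>I. C i) = V"
    using cover by blast
  moreover have "(\<Union>i<card I. C (h i)) = (\<Union>i\<in>I. C i)"
    using image_image[of C h "{..<card I}"] h by simp
  ultimately have "(\<Union>i<card I. C (h i)) = V"
    by simp
  moreover have "\<forall>i<card I. independent_set V adj (C (h i))"
    using independent h by blast
  ultimately show ?thesis
    unfolding chromatic_number_def by (intro Least_le exI conjI)
qed

lemma dim_Int_ge:
  fixes A B :: "('a::field ^ 'n) set"
  assumes "vec.subspace A" "vec.subspace B"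
  shows "vec.dim A + vec.dim B \<le> vec.dim (A \<inter> B) + CARD('n)"
proof -
  have "vec.dim {x + y |x y. x \<in> A \<and> y \<in> B} \<le> CARD('n)"
    by (rule dim_subset_UNIV_cart_gen)
  then show ?thesis
    using vec.dim_sums_Int[OF assms] by linarith
qed

lemma subspaces_meet_nontrivially:
  fixes A B :: "('a::field ^ 'n) set"
  assumes "vec.subspace A" "vec.subspace B" "vec.dim A + vec.dim B > CARD('n)"
  shows "\<exists>x\<in>A \<inter> B. x \<noteq> 0"
proof -
  have "vec.dim (A \<inter> B) \<noteq> 0"
    using dim_Int_ge[OF assms(1,2)] assms(3) by linarith
  then show ?thesis
    using vec.dim_eq_0[of "A \<inter> B"] by auto
qed

lemma independent_set_flags23I:
  assumes "C \<subseteq> flags23"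
    and meet: "\<And>E S E' S'. (E, S) \<in> C \<Longrightarrow> (E', S') \<in> C \<Longrightarrow>
      \<exists>x. x \<noteq> 0 \<and> (x \<in> E \<inter> S' \<or> x \<in> E' \<inter> S)"
  shows "independent_set flags23 kneser_adj C"
  unfolding independent_set_def
proof (intro conjI ballI)
  fix F F' assume "F \<in> C" "F' \<in> C"
  then obtain x where "x \<noteq> 0" "x \<in> fst F \<inter> snd F' \<or> x \<in> fst F' \<inter> snd F"
    using meet[of "fst F" "snd F" "fst F'" "snd F'"] by auto
  then show "\<not> kneser_adj F F'"
    unfolding kneser_adj_def by auto
qed (rule assms(1))

definition point_class :: "'a::field ^ 7 \<Rightarrow> 'a ^ 7 \<Rightarrow> (('a ^ 7) set \<times> ('a ^ 7) set) set" where
  "point_class P R = {(E, S) \<in> flags23. P \<in> S \<and> (P \<in> E \<or> R \<in> E)}"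

definition line_class :: "'a::field ^ 7 \<Rightarrow> ('a ^ 7) set \<Rightarrow> (('a ^ 7) set \<times> ('a ^ 7) set) set" where
  "line_class P L = {(E, S) \<in> flags23. P \<in> E \<or> (L \<subseteq> S \<and> (\<exists>x\<in>E \<inter> L. x \<noteq> 0))}"

lemma independent_point_class:
  assumes "P \<noteq> 0" "R \<noteq> 0"
  shows "independent_set flags23 kneser_adj (point_class P R)"
proof (rule independent_set_flags23I)
  show "point_class P R \<subseteq> flags23"
    unfolding point_class_def by blast
  fix E S E' S' assume "(E, S) \<in> point_class P R" "(E', S') \<in> point_class P R"
  then have "E' \<subseteq> S'" "P \<in> S" "P \<in> S'" "P \<in> E \<or> R \<in> E" "P \<in> E' \<or> R \<in> E'"
    unfolding point_class_def flags23_def by simp_all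
  then show "\<exists>x. x \<noteq> 0 \<and> (x \<in> E \<inter> S' \<or> x \<in> E' \<inter> S)"
    using assms by blast
qed

lemma independent_line_class:
  assumes "P \<noteq> 0" "P \<in> L"
  shows "independent_set flags23 kneser_adj (line_class P L)"
proof (rule independent_set_flags23I)
  show "line_class P L \<subseteq> flags23"
    unfolding line_class_def by blast
  fix E S E' S' assume "(E, S) \<in> line_class P L" "(E', S') \<in> line_class P L"
  then have "E \<subseteq> S" "E' \<subseteq> S'"
    and "P \<in> E \<or> (L \<subseteq> S \<and> (\<exists>x\<in>E \<inter> L. x \<noteq> 0))"
      "P \<in> E' \<or> (L \<subseteq> S' \<and> (\<exists>x\<in>E' \<inter> L. x \<noteq> 0))"
    unfolding line_class_def flags23_def by simp_all
  then show "\<exists>x. x \<noteq> 0 \<and> (x \<in> E \<inter> S' \<or> x \<in> E' \<inter> S)"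
    using assms by blast
qed

definition base_space :: "('a::field ^ 7) set" where
  "base_space = {x. \<forall>i. i \<notin> {0, 1, 2, 3, 4} \<longrightarrow> x $ i = 0}"

definition base_line :: "('a::field ^ 7) set" where
  "base_line = {x. \<forall>i. i \<notin> {0, 1} \<longrightarrow> x $ i = 0}"

lemma subspace_base_space: "vec.subspace base_space"
  unfolding vec.subspace_def base_space_def by auto

lemma subspace_base_line: "vec.subspace base_line"
  unfolding vec.subspace_def base_line_def by auto

lemma dim_base_space: "vec.dim (base_space :: ('a::field ^ 7) set) = 5"
  unfolding base_space_def dim_substandard_cart by simp

lemma dim_base_line: "vec.dim (base_line :: ('a::field ^ 7) set) = 2"
  unfolding base_line_def dim_substandard_cart by simp

lemma mem_base_line_iff: "x \<in> base_line \<longleftrightarrow> x \<in> base_space \<and> x $ 2 = 0 \<and> x $ 3 = 0 \<and> x $ 4 = 0"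
  unfolding base_line_def base_space_def by auto

lemma base_line_subset_base_space: "base_line \<subseteq> base_space"
  using mem_base_line_iff by blast

lemma base_space_eqI:
  assumes "x \<in> base_space" "y \<in> base_space"
    and "x $ 0 = y $ 0" "x $ 1 = y $ 1" "x $ 2 = y $ 2" "x $ 3 = y $ 3" "x $ 4 = y $ 4"
  shows "x = y"
proof (rule vec_eq_iff[THEN iffD2], intro allI)
  fix i :: 7
  show "x $ i = y $ i"
    using assms by (cases "i \<in> {0, 1, 2, 3, 4}") (auto simp: base_space_def)
qed

lemma base_line_eqI:
  assumes "x \<in> base_line" "y \<in> base_line" "x $ 0 = y $ 0" "x $ 1 = y $ 1"
  shows "x = y"
  using assms by (intro base_space_eqI) (auto simp: mem_base_line_iff)

definition normal_points :: "('a::field ^ 7) set" where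
  "normal_points = {Q \<in> base_space.
     Q $ 2 = 1 \<or> (Q $ 2 = 0 \<and> Q $ 3 = 1) \<or> (Q $ 2 = 0 \<and> Q $ 3 = 0 \<and> Q $ 4 = 1)}"

definition line_partner :: "'a::field ^ 7 \<Rightarrow> 'a ^ 7" where
  "line_partner Q = Q $ 1 *s axis 0 1 + axis 1 1"

lemma zero_notin_normal_points: "0 \<notin> normal_points"
  unfolding normal_points_def by simp

lemma scale_to_normal_point:
  assumes "v \<in> base_space" "v \<notin> base_line"
  shows "\<exists>c. c *s v \<in> normal_points"
proof -
  have "v $ 2 \<noteq> 0 \<or> (v $ 2 = 0 \<and> v $ 3 \<noteq> 0) \<or> (v $ 2 = 0 \<and> v $ 3 = 0 \<and> v $ 4 \<noteq> 0)"
    using assms by (auto simp: mem_base_line_iff)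
  then consider "v $ 2 \<noteq> 0" | "v $ 2 = 0" "v $ 3 \<noteq> 0" | "v $ 2 = 0" "v $ 3 = 0" "v $ 4 \<noteq> 0"
    by blast
  then show ?thesis
  proof cases
    case 1
    then show ?thesis
      using assms(1) by (intro exI[of _ "1 / v $ 2"]) (simp add: normal_points_def base_space_def)
  next
    case 2
    then show ?thesis
      using assms(1) by (intro exI[of _ "1 / v $ 3"]) (simp add: normal_points_def base_space_def)
  next
    case 3
    then show ?thesis
      using assms(1) by (intro exI[of _ "1 / v $ 4"]) (simp add: normal_points_def base_space_def)
  qed
qed

lemma line_partner_in_base_line: "line_partner Q \<in> base_line"
  unfolding line_partner_def base_line_def by (simp add: axis_def)

lemma line_partner_nonzero: "line_partner Q \<noteq> 0"
proof -
  have "line_partner Q $ 1 = 1"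
    by (simp add: line_partner_def axis_def)
  then show ?thesis
    by auto
qed

lemma normal_point_with_line_partner:
  assumes w: "w \<in> normal_points" and v: "v \<in> base_line" "v $ 1 = 1"
  shows "\<exists>t. w + t *s v \<in> normal_points \<and> line_partner (w + t *s v) = v"
proof (intro exI conjI)
  define Q where "Q = w + (v $ 0 - w $ 1) *s v"
  have "w \<in> base_space" "v \<in> base_space"
    using w v base_line_subset_base_space unfolding normal_points_def by auto
  then have "Q \<in> base_space"
    unfolding Q_def using subspace_base_space vec.subspace_add vec.subspace_scale by blast
  moreover have "Q $ 2 = w $ 2" "Q $ 3 = w $ 3" "Q $ 4 = w $ 4"
    using v(1) unfolding Q_def by (simp_all add: mem_base_line_iff)
  ultimately show "Q \<in> normal_points"
    using w unfolding normal_points_def by simp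
  have "line_partner Q $ 0 = v $ 0" "line_partner Q $ 1 = v $ 1"
    using v(2) unfolding line_partner_def Q_def by (simp_all add: axis_def)
  then show "line_partner Q = v"
    using line_partner_in_base_line v(1) by (intro base_line_eqI)
qed

lemma solid_meets_base_space_off_base_line:
  fixes S :: "('a::field ^ 7) set"
  assumes "vec.subspace S" "vec.dim S = 4" "\<not> base_line \<subseteq> S"
  shows "\<exists>w\<in>S \<inter> base_space. w \<notin> base_line"
proof (rule ccontr)
  assume "\<not> ?thesis"
  then have "S \<inter> base_space \<subseteq> base_line"
    by blast
  moreover have "vec.dim (base_line :: ('a ^ 7) set) \<le> vec.dim (S \<inter> base_space)"
    using dim_Int_ge[OF assms(1) subspace_base_space] assms(2)
      dim_base_space[where 'a='a] dim_base_line[where 'a='a]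
    by simp
  ultimately have "S \<inter> base_space = base_line"
    using vec.subspace_dim_equal[OF vec.subspace_inter[OF assms(1) subspace_base_space]
        subspace_base_line] by blast
  then show False
    using assms(3) by blast
qed

lemma axis0_eq_scaled_base_line_vector:
  assumes "v \<in> base_line" "v \<noteq> 0" "v $ 1 = 0"
  shows "axis 0 1 = (1 / v $ 0) *s v"
proof -
  have "v $ 0 \<noteq> 0"
  proof
    assume "v $ 0 = 0"
    then have "v = 0"
      using assms(1,3) vec.subspace_0[OF subspace_base_line] by (intro base_line_eqI) auto
    with assms(2) show False ..
  qed
  moreover have "axis 0 1 \<in> base_line" "(1 / v $ 0) *s v \<in> base_line"
    using assms(1) vec.subspace_scale[OF subspace_base_line] by (auto simp: base_line_def axis_def)
  ultimately show ?thesis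
    using assms(3) by (intro base_line_eqI) (auto simp: axis_def)
qed

lemma normal_point_in_solid_with_partner_in_plane:
  assumes E: "vec.subspace E" "E \<subseteq> S" "v \<in> E" "v \<in> base_line" "v $ 1 \<noteq> 0"
    and S: "vec.subspace S" "w \<in> S" "w \<in> base_space" "w \<notin> base_line"
  shows "\<exists>Q\<in>normal_points. Q \<in> S \<and> line_partner Q \<in> E"
proof -
  define v' where "v' = (1 / v $ 1) *s v"
  have v': "v' \<in> E" "v' \<in> base_line" "v' $ 1 = 1"
    unfolding v'_def using E subspace_base_line vec.subspace_scale by auto
  obtain c where "c *s w \<in> normal_points"
    using scale_to_normal_point S(3,4) by blast
  then obtain t where Q: "c *s w + t *s v' \<in> normal_points" "line_partner (c *s w + t *s v') = v'"
    using normal_point_with_line_partner[OF _ v'(2,3)] by blast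
  have "c *s w + t *s v' \<in> S"
    using S(1,2) v'(1) E(2) vec.subspace_add vec.subspace_scale by blast
  then show ?thesis
    using Q v'(1) by metis
qed

lemma flag_in_line_class_or_point_class:
  assumes flag: "(E, S) \<in> flags23"
  shows "(E, S) \<in> line_class (axis 0 1) base_line
    \<or> (\<exists>Q\<in>normal_points. (E, S) \<in> point_class Q (line_partner Q))"
proof -
  have E: "vec.subspace E" "vec.dim E = 3" and S: "vec.subspace S" "vec.dim S = 4" "E \<subseteq> S"
    using flag unfolding flags23_def pg_subspace_def by auto
  have in_point_class: "(E, S) \<in> point_class Q R" if "Q \<in> S" "Q \<in> E \<or> R \<in> E" for Q R
    using flag that unfolding point_class_def by blast
  have in_line_class: "(E, S) \<in> line_class (axis 0 1) base_line"
    if "axis 0 1 \<in> E \<or> (base_line \<subseteq> S \<and> (\<exists>x\<in>E \<inter> base_line. x \<noteq> 0))"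
    using flag that unfolding line_class_def by blast
  show ?thesis
  proof (cases "E \<inter> base_space \<subseteq> base_line")
    case False
    then obtain u where "u \<in> E" "u \<in> base_space" "u \<notin> base_line"
      by blast
    moreover from this obtain c where "c *s u \<in> normal_points"
      using scale_to_normal_point by blast
    ultimately show ?thesis
      using in_point_class E(1) S(3) vec.subspace_scale by blast
  next
    case True
    obtain v where v: "v \<in> E" "v \<in> base_line" "v \<noteq> 0"
      using subspaces_meet_nontrivially[OF E(1) subspace_base_space] E(2)
        dim_base_space[where 'a='a] True
      by auto
    consider "base_line \<subseteq> S" | "v $ 1 = 0" | "\<not> base_line \<subseteq> S" "v $ 1 \<noteq> 0"
      by blast
    then show ?thesis
    proof cases
      case 1
      then show ?thesis
        using in_line_class v by blast
    next
      case 2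
      then have "axis 0 1 \<in> E"
        using axis0_eq_scaled_base_line_vector[OF v(2,3)] vec.subspace_scale[OF E(1) v(1)]
        by simp
      then show ?thesis
        using in_line_class by blast
    next
      case 3
      obtain w where "w \<in> S" "w \<in> base_space" "w \<notin> base_line"
        using solid_meets_base_space_off_base_line[OF S(1,2) 3(1)] by blast
      then show ?thesis
        using normal_point_in_solid_with_partner_in_plane[OF E(1) S(3) v(1,2) 3(2) S(1)]
          in_point_class by blast
    qed
  qed
qed

lemma card_normal_points_le:
  "card (normal_points :: ('a::{field, finite} ^ 7) set)
     \<le> CARD('a) ^ 4 + CARD('a) ^ 3 + CARD('a) ^ 2"
proof -
  define code :: "'a ^ 7 \<Rightarrow> ('a \<times> 'a \<times> 'a \<times> 'a) + ('a \<times> 'a \<times> 'a) + ('a \<times> 'a)" where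
    "code Q = (if Q $ 2 \<noteq> 0 then Inl (Q $ 0, Q $ 1, Q $ 3, Q $ 4)
      else if Q $ 3 \<noteq> 0 then Inr (Inl (Q $ 0, Q $ 1, Q $ 4))
      else Inr (Inr (Q $ 0, Q $ 1)))" for Q
  have "inj_on code normal_points"
    by (rule inj_onI, rule base_space_eqI)
      (auto simp: normal_points_def code_def split: if_splits)
  then have "card (normal_points :: ('a ^ 7) set) = card (code ` normal_points)"
    by (simp add: card_image)
  also have "\<dots> \<le> CARD(('a \<times> 'a \<times> 'a \<times> 'a) + ('a \<times> 'a \<times> 'a) + ('a \<times> 'a))"
    by (rule card_mono) auto
  also have "\<dots> = CARD('a) ^ 4 + CARD('a) ^ 3 + CARD('a) ^ 2"
    by (simp add: card_UNIV_sum power_numeral_reduce)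
  finally show ?thesis .
qed

fun colour_class :: "('a::field ^ 7) option \<Rightarrow> (('a ^ 7) set \<times> ('a ^ 7) set) set" where
  "colour_class None = line_class (axis 0 1) base_line"
| "colour_class (Some Q) = point_class Q (line_partner Q)"

lemma independent_colour_class:
  assumes "c \<in> insert None (Some ` normal_points)"
  shows "independent_set flags23 kneser_adj (colour_class c)"
proof (cases c)
  case None
  have "(axis 0 1 :: 'a ^ 7) \<noteq> 0"
    by (simp add: axis_eq_0_iff)
  moreover have "axis 0 1 \<in> base_line"
    by (simp add: base_line_def axis_def)
  ultimately show ?thesis
    unfolding None colour_class.simps by (rule independent_line_class)
next
  case (Some Q)
  then have "Q \<noteq> 0"
    using assms zero_notin_normal_points by auto
  then show ?thesis
    unfolding Some by (simp add: independent_point_class line_partner_nonzero)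
qed

lemma flags23_subset_colour_classes:
  "flags23 \<subseteq> (\<Union>c \<in> insert None (Some ` normal_points). colour_class c)"
proof
  fix F :: "('a ^ 7) set \<times> ('a ^ 7) set"
  assume "F \<in> flags23"
  then show "F \<in> (\<Union>c \<in> insert None (Some ` normal_points). colour_class c)"
    using flag_in_line_class_or_point_class[of "fst F" "snd F"] by auto
qed

theorem proposition7p2:
  fixes q :: nat
  assumes "q = CARD('a::{field, finite})"
  shows "chromatic_number (flags23 :: (('a ^ 7) set \<times> ('a ^ 7) set) set) kneser_adj
           \<le> q ^ 4 + q ^ 3 + q ^ 2 + 1"
proof -
  let ?colours = "insert None (Some ` (normal_points :: ('a ^ 7) set))"
  have "chromatic_number (flags23 :: (('a ^ 7) set \<times> ('a ^ 7) set) set) kneser_adj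
      \<le> card ?colours"
    by (rule chromatic_number_le_card[OF _ independent_colour_class
          flags23_subset_colour_classes]) auto
  also have "\<dots> \<le> card (normal_points :: ('a ^ 7) set) + 1"
    by (simp add: card_insert_if card_image)
  also have "\<dots> \<le> q ^ 4 + q ^ 3 + q ^ 2 + 1"
    using card_normal_points_le assms by simp
  finally show ?thesis .
qed

end
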